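(* If a quadrilateral $q$ is $\frac{\pi}{12}$-near square and has two adjacent acute angles, then $q$ has a periodic billiard path.
   Context: A quadrilateral is cut by a diagonal into two triangles. Its parameters $(a_1,a_2,a_3,a_4)$ are the four angles that the diagonal makes with the four sides (the angles of the two triangles at the endpoints of the diagonal). For $\varepsilon>0$, the quadrilateral is $\varepsilon$-near square if $|a_i-\pi/4|<\varepsilon$ for all $i$. A billiard path is a straight-line trajectory inside the polygon that reflects off the sides with angle of incidence equal to angle of reflection. Trajectories hitting vertices are excluded. It is periodic if it repeats itself. *)

theory Defs
  imports "HOL-Analysis.Analysis"
begin

text \<open>Points of the plane are complex numbers.  A quadrilateral is given by its
vertices A, B, C, D in cyclic order; the diagonal used for the parameters is AC.\<close>

definition vangle :: "complex \<Rightarrow> complex \<Rightarrow> real" where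
  "vangle u v = arccos (inner u v / (norm u * norm v))"

definition cross2 :: "complex \<Rightarrow> complex \<Rightarrow> real" where
  "cross2 u v = Im (cnj u * v)"

definition diag_splits :: "complex \<Rightarrow> complex \<Rightarrow> complex \<Rightarrow> complex \<Rightarrow> bool" where
  "diag_splits A B C D \<longleftrightarrow> cross2 (C - A) (B - A) * cross2 (C - A) (D - A) < 0"

definition quad_params :: "complex \<Rightarrow> complex \<Rightarrow> complex \<Rightarrow> complex \<Rightarrow> real list" where
  "quad_params A B C D =
     [vangle (B - A) (C - A), vangle (D - A) (C - A),
      vangle (B - C) (A - C), vangle (D - C) (A - C)]"

definition near_square :: "real \<Rightarrow> complex \<Rightarrow> complex \<Rightarrow> complex \<Rightarrow> complex \<Rightarrow> bool" where
  "near_square \<epsilon> A B C D \<longleftrightarrow> diag_splits A B C D \<and>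
     (\<forall>a \<in> set (quad_params A B C D). \<bar>a - pi / 4\<bar> < \<epsilon>)"

text \<open>Interior angles of the quadrilateral at its vertices (the quadrilaterals
considered are convex, so each is the angle between the two adjacent sides).\<close>
definition quad_angles :: "complex \<Rightarrow> complex \<Rightarrow> complex \<Rightarrow> complex \<Rightarrow> real list" where
  "quad_angles A B C D =
     [vangle (D - A) (B - A), vangle (A - B) (C - B),
      vangle (B - C) (D - C), vangle (C - D) (A - D)]"

definition two_adjacent_acute :: "complex \<Rightarrow> complex \<Rightarrow> complex \<Rightarrow> complex \<Rightarrow> bool" where
  "two_adjacent_acute A B C D \<longleftrightarrow>
     (\<exists>i < 4. quad_angles A B C D ! i < pi / 2 \<and> quad_angles A B C D ! ((i + 1) mod 4) < pi / 2)"

definition quad_region :: "complex \<Rightarrow> complex \<Rightarrow> complex \<Rightarrow> complex \<Rightarrow> complex set" where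
  "quad_region A B C D = convex hull {A, B, C} \<union> convex hull {A, C, D}"

definition quad_sides :: "complex \<Rightarrow> complex \<Rightarrow> complex \<Rightarrow> complex \<Rightarrow> (complex \<times> complex) set" where
  "quad_sides A B C D = {(A, B), (B, C), (C, D), (D, A)}"

definition reflect_dir :: "complex \<Rightarrow> complex \<Rightarrow> complex" where
  "reflect_dir u v = (2 * inner v u / inner u u) *\<^sub>R u - v"

text \<open>A periodic billiard path, given by its bounce points p 0, p 1, ... with
p (i + n) = p i.\<close>
definition periodic_billiard_path ::
  "complex \<Rightarrow> complex \<Rightarrow> complex \<Rightarrow> complex \<Rightarrow> (nat \<Rightarrow> complex) \<Rightarrow> nat \<Rightarrow> bool" where
  "periodic_billiard_path A B C D p n \<longleftrightarrow> n > 0 \<and>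
     (\<forall>i. p (i + n) = p i) \<and>
     (\<forall>i. p i \<noteq> p (Suc i) \<and>
          open_segment (p i) (p (Suc i)) \<subseteq> interior (quad_region A B C D)) \<and>
     (\<forall>i. \<exists>(X, Y) \<in> quad_sides A B C D. p (Suc i) \<in> open_segment X Y \<and>
          (\<exists>c > 0. p (Suc (Suc i)) - p (Suc i) = c *\<^sub>R reflect_dir (Y - X) (p (Suc i) - p i)))"

definition has_periodic_billiard_path :: "complex \<Rightarrow> complex \<Rightarrow> complex \<Rightarrow> complex \<Rightarrow> bool" where
  "has_periodic_billiard_path A B C D \<longleftrightarrow> (\<exists>p n. periodic_billiard_path A B C D p n)"

end

theory Submission
  imports Defs
begin

(* Extend the sides AD and BC beyond D and C until they meet at E.  When the angles at A and B
   are acute and all four parameters lie within pi/12 of pi/4, the triangle ABE is acute and the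
   feet of its altitudes from A and B fall inside the sides BC and AD of the quadrilateral.
   Fagnano's orbit, the orthic triangle of ABE, is then a billiard path of period 3 inside the
   quadrilateral.  The estimates are made after a similarity, possibly composed with a reflection,
   that puts A at 0 and C at 1; relabelling the vertices moves any two adjacent acute angles to
   A and B. *)

lemma cross2_eq: "cross2 u v = Re u * Im v - Im u * Re v"
  by (simp add: cross2_def)

lemma cross2_scaleR [simp]:
  "cross2 u (t *\<^sub>R v) = t * cross2 u v" "cross2 (t *\<^sub>R u) v = t * cross2 u v"
  by (simp_all add: cross2_eq algebra_simps)

lemma cross2_mult: "cross2 (w * u) (w * v) = (cmod w)\<^sup>2 * cross2 u v"
  unfolding cross2_eq cmod_power2 by (simp add: algebra_simps power2_eq_square)

lemma inner_mult: "inner (w * u) (w * v) = (cmod w)\<^sup>2 * inner u v"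
  unfolding inner_complex_def cmod_power2 by (simp add: algebra_simps power2_eq_square)

lemma cross2_cnj: "cross2 (cnj u) (cnj v) = - cross2 u v"
  by (simp add: cross2_eq)

lemma inner_cnj: "inner (cnj u) (cnj v) = inner u v"
  by (simp add: inner_complex_def)

lemma diff_affine: "(X + w * P) - (X + w * Q) = w * (P - Q)" for X w P Q :: complex
  by (simp add: right_diff_distrib)

lemma vangle_commute: "vangle u v = vangle v u"
  by (simp add: vangle_def inner_commute mult.commute)

lemma vangle_mult:
  assumes "w \<noteq> 0"
  shows "vangle (w * u) (w * v) = vangle u v"
proof -
  have "norm (w * u) * norm (w * v) = (cmod w)\<^sup>2 * (norm u * norm v)"
    by (simp add: norm_mult power2_eq_square mult_ac)
  thus ?thesis
    using assms by (simp add: vangle_def inner_mult)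
qed

lemma vangle_affine:
  "w \<noteq> 0 \<Longrightarrow> vangle ((X + w * P) - (X + w * Q)) ((X + w * R) - (X + w * S)) = vangle (P - Q) (R - S)"
  unfolding diff_affine by (rule vangle_mult)

lemma vangle_cnj: "vangle (cnj u) (cnj v) = vangle u v"
  by (simp add: vangle_def inner_cnj)

lemma vangle_minus: "vangle (- u) (- v) = vangle u v"
  by (simp add: vangle_def)

lemma vangle_one_coords:
  assumes "vangle z 1 = a"
  shows "Re z = cmod z * cos a" and "\<bar>Im z\<bar> = cmod z * sin a"
proof -
  have bound: "\<bar>Re z / cmod z\<bar> \<le> 1"
    by (cases "z = 0") (simp_all add: abs_Re_le_cmod divide_le_eq_1 abs_divide)
  have a: "a = arccos (Re z / cmod z)"
    using assms by (simp add: vangle_def inner_complex_def)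
  show "Re z = cmod z * cos a"
    using bound unfolding a by (cases "z = 0") (simp_all add: cos_arccos_abs)
  have "sin a = sqrt (1 - (Re z / cmod z)\<^sup>2)"
    using bound unfolding a abs_le_iff by (intro sin_arccos) auto
  also have "cmod z * \<dots> = sqrt ((cmod z)\<^sup>2 - (Re z)\<^sup>2)"
    by (cases "z = 0") (simp_all add: power_divide field_simps real_sqrt_divide)
  also have "\<dots> = \<bar>Im z\<bar>"
    by (simp add: cmod_power2)
  finally show "\<bar>Im z\<bar> = cmod z * sin a" ..
qed

lemma vangle_lt_pi_half_iff: "vangle u v < pi / 2 \<longleftrightarrow> 0 < inner u v"
proof -
  have bound: "\<bar>inner u v / (norm u * norm v)\<bar> \<le> 1"
    using Cauchy_Schwarz_ineq2[of u v]
    by (cases "u = 0 \<or> v = 0") (auto simp: abs_divide divide_le_eq_1)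
  have "vangle u v < arccos 0 \<longleftrightarrow> 0 < inner u v / (norm u * norm v)"
    unfolding vangle_def using bound by (subst arccos_less_mono) auto
  moreover have "0 < inner u v / (norm u * norm v) \<longleftrightarrow> 0 < inner u v" if "u \<noteq> 0" "v \<noteq> 0"
    using that by (simp add: field_simps)
  ultimately show ?thesis
    by (cases "u = 0 \<or> v = 0") auto
qed

lemma reflect_dir_scaleR: "s \<noteq> 0 \<Longrightarrow> reflect_dir (s *\<^sub>R u) = reflect_dir u"
  by (simp add: reflect_dir_def fun_eq_iff)

lemma reflect_dir_mult:
  assumes "w \<noteq> 0"
  shows "reflect_dir w (w * v) = w * cnj v"
proof -
  have "inner (w * v) w = (cmod w)\<^sup>2 * inner v 1" "inner w w = (cmod w)\<^sup>2"
    using inner_mult[of w v 1] inner_mult[of w 1 1] by (simp_all add: inner_complex_def)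
  thus ?thesis
    using assms by (simp add: reflect_dir_def complex_eq_iff inner_complex_def algebra_simps)
qed

section \<open>Fagnano's orbit of an acute triangle\<close>

definition foot :: "complex \<Rightarrow> complex \<Rightarrow> complex \<Rightarrow> complex" where
  "foot P u Z = P + (inner (Z - P) u / inner u u) *\<^sub>R u"

lemma foot_mult:
  assumes "w \<noteq> 0"
  shows "foot (X + w * P) (w * u) (X + w * Z) = X + w * foot P u Z"
proof -
  have "(cmod w)\<^sup>2 * a / ((cmod w)\<^sup>2 * b) = a / b" for a b
    using assms by simp
  thus ?thesis
    unfolding foot_def diff_affine inner_mult by (simp add: distrib_left)
qed

lemma foot_same_line:
  assumes "s \<noteq> 0"
  shows "foot (P + r *\<^sub>R u) (s *\<^sub>R u) Z = foot P u Z"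
proof (cases "u = 0")
  case False
  have "inner (Z - (P + r *\<^sub>R u)) (s *\<^sub>R u) / inner (s *\<^sub>R u) (s *\<^sub>R u) * s
      = inner (Z - P) u / inner u u - r"
    using assms False by (simp add: inner_diff_left inner_add_left field_simps)
  thus ?thesis
    unfolding foot_def scaleR_scaleR by (simp add: scaleR_diff_left)
qed (simp add: foot_def)

lemma foot_scaleR: "s \<noteq> 0 \<Longrightarrow> foot P (s *\<^sub>R u) Z = foot P u Z"
  using foot_same_line[of s P 0 u Z] by simp

lemma foot_swap: "foot Q (P - Q) Z = foot P (Q - P) Z"
  using foot_same_line[of "-1" P 1 "Q - P" Z] by simp

lemma foot_in_open_segment:
  assumes "0 < inner (Z - P) (Q - P)" "0 < inner (Z - Q) (P - Q)"
  shows "foot P (Q - P) Z \<in> open_segment P Q"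
proof -
  define l where "l = inner (Z - P) (Q - P) / inner (Q - P) (Q - P)"
  have "inner (Z - P) (Q - P) + inner (Z - Q) (P - Q) = inner (Q - P) (Q - P)"
    by (simp add: inner_complex_def algebra_simps)
  hence "inner (Z - P) (Q - P) < inner (Q - P) (Q - P)" "0 < inner (Q - P) (Q - P)"
    using assms by linarith+
  hence "0 < l" "l < 1" "P \<noteq> Q"
    using assms by (auto simp: l_def)
  moreover have "foot P (Q - P) Z = (1 - l) *\<^sub>R P + l *\<^sub>R Q"
    by (simp add: foot_def l_def algebra_simps)
  ultimately show ?thesis
    unfolding in_segment by blast
qed

lemma orthic_reflection_normalized:
  assumes "Im e \<noteq> 0" "0 < Re e" "Re e < 1"
  shows "\<exists>c>0. foot 1 (e - 1) 0 - foot 0 1 e = c *\<^sub>R cnj (foot 0 1 e - foot 0 e 1)"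
proof -
  obtain x y where e: "e = Complex x y"
    by (cases e)
  define N where "N = x * x + y * y"
  define M where "M = (x - 1) * (x - 1) + y * y"
  have "y \<noteq> 0" "0 < x" "x < 1"
    using assms e by simp_all
  have "0 < x * x" "0 < y * y"
    using \<open>y \<noteq> 0\<close> \<open>0 < x\<close> by (auto simp: zero_less_mult_iff linorder_neq_iff)
  hence pos: "0 < N" "0 < M"
    unfolding N_def M_def by (simp_all add: add_pos_nonneg add_nonneg_pos)
  have inners: "inner (0 - 1) (e - 1) = 1 - x" "inner (e - 1) (e - 1) = M" "inner (e - 0) 1 = x"
    "inner (1::complex) 1 = 1" "inner (1 - 0) e = x" "inner e e = N"
    by (simp_all add: e M_def N_def inner_complex_def)
  have f1: "foot 1 (e - 1) 0 - foot 0 1 e = ((1 - x) / M) *\<^sub>R Complex (x * x - x + y * y) y"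
    unfolding foot_def inners using pos
    by (simp add: complex_eq_iff e field_simps) (simp add: M_def algebra_simps)
  have f2: "foot 0 1 e - foot 0 e 1 = (x / N) *\<^sub>R Complex (x * x - x + y * y) (- y)"
    unfolding foot_def inners using pos
    by (simp add: complex_eq_iff e field_simps) (simp add: N_def algebra_simps)
  have "0 < (1 - x) * N / (M * x)"
    using pos \<open>0 < x\<close> \<open>x < 1\<close> by simp
  thus ?thesis
    unfolding f1 f2 using pos \<open>0 < x\<close>
    by (intro exI[of _ "(1 - x) * N / (M * x)"]) (simp add: complex_eq_iff)
qed

lemma orthic_reflection:
  assumes "cross2 (Y - X) (Z - X) \<noteq> 0" "0 < inner (Z - X) (Y - X)" "0 < inner (Z - Y) (X - Y)"
  shows "\<exists>c>0. foot Y (Z - Y) X - foot X (Y - X) Z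
                 = c *\<^sub>R reflect_dir (Y - X) (foot X (Y - X) Z - foot X (Z - X) Y)"
proof -
  define w where "w = Y - X"
  define e where "e = (Z - X) / w"
  have w: "w \<noteq> 0"
    using assms(1) by (auto simp: w_def cross2_eq)
  have pts: "X + w * 0 = X" "X + w * 1 = Y" "X + w * e = Z"
    using w by (simp_all add: w_def e_def)
  have diffs: "Y - X = w * 1" "Z - X = w * e" "Z - Y = w * (e - 1)" "X - Y = w * (0 - 1)"
    using pts by (auto simp: algebra_simps)
  have "cross2 (Y - X) (Z - X) = (cmod w)\<^sup>2 * Im e"
    "inner (Z - X) (Y - X) = (cmod w)\<^sup>2 * Re e"
    "inner (Z - Y) (X - Y) = (cmod w)\<^sup>2 * (1 - Re e)"
    unfolding diffs cross2_mult inner_mult by (simp_all add: cross2_eq inner_complex_def)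
  hence "Im e \<noteq> 0" "0 < Re e" "Re e < 1"
    using assms by (simp_all add: zero_less_mult_iff)
  then obtain c where c: "c > 0"
    "foot 1 (e - 1) 0 - foot 0 1 e = c *\<^sub>R cnj (foot 0 1 e - foot 0 e 1)"
    using orthic_reflection_normalized by blast
  have feet: "foot Y (Z - Y) X = X + w * foot 1 (e - 1) 0"
    "foot X (Y - X) Z = X + w * foot 0 1 e" "foot X (Z - X) Y = X + w * foot 0 e 1"
    using foot_mult[OF w, of X 1 "e - 1" 0] foot_mult[OF w, of X 0 1 e] foot_mult[OF w, of X 0 e 1]
    unfolding pts diffs[symmetric] by simp_all
  have "foot Y (Z - Y) X - foot X (Y - X) Z = w * (c *\<^sub>R cnj (foot 0 1 e - foot 0 e 1))"
    unfolding feet c(2)[symmetric] by (simp add: algebra_simps)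
  also have "\<dots> = c *\<^sub>R reflect_dir w (w * (foot 0 1 e - foot 0 e 1))"
    by (simp add: reflect_dir_mult[OF w] scaleR_conv_of_real)
  also have "w * (foot 0 1 e - foot 0 e 1) = foot X (Y - X) Z - foot X (Z - X) Y"
    unfolding feet by (simp add: algebra_simps)
  finally show ?thesis
    using c(1) unfolding w_def by blast
qed

(* Fagnano: the orthic triangle of an acute triangle is a closed billiard trajectory. *)
lemma orthic_triangle_reflections:
  assumes "cross2 (Y - X) (Z - X) \<noteq> 0"
    and "0 < inner (Y - X) (Z - X)" "0 < inner (Z - Y) (X - Y)" "0 < inner (X - Z) (Y - Z)"
  defines "FX \<equiv> foot Y (Z - Y) X" and "FY \<equiv> foot Z (X - Z) Y" and "FZ \<equiv> foot X (Y - X) Z"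
  shows "\<exists>c>0. FX - FZ = c *\<^sub>R reflect_dir (Y - X) (FZ - FY)"
    and "\<exists>c>0. FY - FX = c *\<^sub>R reflect_dir (Z - Y) (FX - FZ)"
    and "\<exists>c>0. FZ - FY = c *\<^sub>R reflect_dir (X - Z) (FY - FX)"
proof -
  have "cross2 (Z - Y) (X - Y) = cross2 (Y - X) (Z - X)" "cross2 (X - Z) (Y - Z) = cross2 (Y - X) (Z - X)"
    by (simp_all add: cross2_eq algebra_simps)
  hence "cross2 (Z - Y) (X - Y) \<noteq> 0" "cross2 (X - Z) (Y - Z) \<noteq> 0"
    using assms(1) by simp_all
  note reflections = orthic_reflection[OF assms(1)] orthic_reflection[OF this(1)]
    orthic_reflection[OF this(2)]
  show "\<exists>c>0. FX - FZ = c *\<^sub>R reflect_dir (Y - X) (FZ - FY)"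
    using reflections(1) assms(2,3) unfolding FX_def FY_def FZ_def foot_swap[of X Z]
    by (simp add: inner_commute)
  show "\<exists>c>0. FY - FX = c *\<^sub>R reflect_dir (Z - Y) (FX - FZ)"
    using reflections(2) assms(3,4) unfolding FX_def FY_def FZ_def foot_swap[of Y X]
    by (simp add: inner_commute)
  show "\<exists>c>0. FZ - FY = c *\<^sub>R reflect_dir (X - Z) (FY - FX)"
    using reflections(3) assms(2,4) unfolding FX_def FY_def FZ_def foot_swap[of Z Y]
    by (simp add: inner_commute)
qed

section \<open>Convex quadrilaterals\<close>

definition signed_area :: "complex \<Rightarrow> complex \<Rightarrow> complex \<Rightarrow> real" where
  "signed_area X Y Z = cross2 (Y - X) (Z - X)"

lemma signed_area_rotate: "signed_area Y Z X = signed_area X Y Z"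
  by (simp add: signed_area_def cross2_eq algebra_simps)

lemma signed_area_left [simp]: "signed_area X Y X = 0"
  and signed_area_right [simp]: "signed_area X Y Y = 0"
  by (simp_all add: signed_area_def cross2_eq)

lemma signed_area_convex_combination:
  "signed_area X Y ((1 - u) *\<^sub>R P + u *\<^sub>R Q) = (1 - u) * signed_area X Y P + u * signed_area X Y Q"
  by (simp add: signed_area_def cross2_eq algebra_simps)

lemma signed_area_open_segment_pos:
  assumes "Z \<in> open_segment P Q"
    and "0 \<le> \<sigma> * signed_area X Y P" "0 \<le> \<sigma> * signed_area X Y Q"
    and "0 < \<sigma> * signed_area X Y P \<or> 0 < \<sigma> * signed_area X Y Q"
  shows "0 < \<sigma> * signed_area X Y Z"
proof -
  obtain u where u: "0 < u" "u < 1" "Z = (1 - u) *\<^sub>R P + u *\<^sub>R Q"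
    using assms(1) unfolding in_segment by auto
  have "\<sigma> * signed_area X Y Z = (1 - u) * (\<sigma> * signed_area X Y P) + u * (\<sigma> * signed_area X Y Q)"
    unfolding u(3) signed_area_convex_combination by (simp add: algebra_simps)
  thus ?thesis
    using assms(2-4) u(1,2) by (auto intro: add_pos_nonneg add_nonneg_pos)
qed

lemma in_convex_hull_triangle:
  assumes "0 < \<sigma> * signed_area P Q R"
    and "0 \<le> \<sigma> * signed_area Q R Z" "0 \<le> \<sigma> * signed_area R P Z" "0 \<le> \<sigma> * signed_area P Q Z"
  shows "Z \<in> convex hull {P, Q, R}"
proof -
  define \<Delta> where "\<Delta> = signed_area P Q R"
  have barycentric_nonneg: "0 \<le> a / \<Delta>" if "0 \<le> \<sigma> * a" for a
  proof -
    have "a / \<Delta> = (\<sigma> * a) / (\<sigma> * \<Delta>)"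
      using assms(1) unfolding \<Delta>_def by auto
    moreover have "0 \<le> (\<sigma> * a) / (\<sigma> * \<Delta>)"
      using that assms(1) unfolding \<Delta>_def by (intro divide_nonneg_pos)
    ultimately show ?thesis
      by simp
  qed
  have "\<Delta> \<noteq> 0"
    using assms(1) unfolding \<Delta>_def by auto
  hence "signed_area Q R Z / \<Delta> + signed_area R P Z / \<Delta> + signed_area P Q Z / \<Delta> = 1"
    "Z = (signed_area Q R Z / \<Delta>) *\<^sub>R P + (signed_area R P Z / \<Delta>) *\<^sub>R Q
       + (signed_area P Q Z / \<Delta>) *\<^sub>R R"
    unfolding \<Delta>_def by (simp_all add: field_simps complex_eq_iff)
      (simp_all add: signed_area_def cross2_eq algebra_simps)
  thus ?thesis
    unfolding convex_hull_3 using barycentric_nonneg assms(2-4) by blast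
qed

(* Strict convexity with orientation: sigma = 1 for counterclockwise, sigma = -1 for clockwise. *)
definition convex_quad :: "real \<Rightarrow> complex \<Rightarrow> complex \<Rightarrow> complex \<Rightarrow> complex \<Rightarrow> bool" where
  "convex_quad \<sigma> A B C D \<longleftrightarrow>
     0 < \<sigma> * signed_area A B C \<and> 0 < \<sigma> * signed_area A B D \<and>
     0 < \<sigma> * signed_area B C D \<and> 0 < \<sigma> * signed_area B C A \<and>
     0 < \<sigma> * signed_area C D A \<and> 0 < \<sigma> * signed_area C D B \<and>
     0 < \<sigma> * signed_area D A B \<and> 0 < \<sigma> * signed_area D A C"

definition quad_inside :: "real \<Rightarrow> complex \<Rightarrow> complex \<Rightarrow> complex \<Rightarrow> complex \<Rightarrow> complex set" where
  "quad_inside \<sigma> A B C D = {Z. 0 < \<sigma> * signed_area A B Z \<and> 0 < \<sigma> * signed_area B C Z \<and>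
     0 < \<sigma> * signed_area C D Z \<and> 0 < \<sigma> * signed_area D A Z}"

lemma convex_quad_rotate: "convex_quad \<sigma> A B C D \<Longrightarrow> convex_quad \<sigma> B C D A"
  by (auto simp: convex_quad_def)

lemma quad_inside_rotate: "quad_inside \<sigma> B C D A = quad_inside \<sigma> A B C D"
  by (auto simp: quad_inside_def)

lemma open_quad_inside: "open (quad_inside \<sigma> A B C D)"
proof -
  have "open {Z. 0 < \<sigma> * signed_area X Y Z}" for X Y
    unfolding signed_area_def cross2_eq by (intro open_Collect_less continuous_intros)
  hence "open ({Z. 0 < \<sigma> * signed_area A B Z} \<inter> {Z. 0 < \<sigma> * signed_area B C Z} \<inter>
      {Z. 0 < \<sigma> * signed_area C D Z} \<inter> {Z. 0 < \<sigma> * signed_area D A Z})"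
    by (intro open_Int)
  thus ?thesis
    by (simp add: quad_inside_def Collect_conj_eq Int_assoc)
qed

lemma quad_inside_subset_interior:
  assumes "convex_quad \<sigma> A B C D"
  shows "quad_inside \<sigma> A B C D \<subseteq> interior (quad_region A B C D)"
proof (rule interior_maximal[OF _ open_quad_inside], rule subsetI)
  fix Z
  assume Z: "Z \<in> quad_inside \<sigma> A B C D"
  have diag: "signed_area C A Z = - signed_area A C Z"
    by (simp add: signed_area_def cross2_eq algebra_simps)
  have "signed_area A C D = signed_area D A C"
    by (simp add: signed_area_rotate)
  hence "Z \<in> convex hull {A, B, C} \<or> Z \<in> convex hull {A, C, D}"
    using assms Z diag in_convex_hull_triangle[of \<sigma> A B C Z] in_convex_hull_triangle[of \<sigma> A C D Z]
    by (cases "\<sigma> * signed_area A C Z \<le> 0") (auto simp: convex_quad_def quad_inside_def)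
  thus "Z \<in> quad_region A B C D"
    unfolding quad_region_def by blast
qed

lemma signed_areas_on_side:
  assumes "convex_quad \<sigma> A B C D" "P \<in> open_segment A B"
  shows "signed_area A B P = 0" "0 < \<sigma> * signed_area B C P" "0 < \<sigma> * signed_area C D P"
    "0 < \<sigma> * signed_area D A P"
proof -
  obtain u where u: "0 < u" "u < 1" "P = (1 - u) *\<^sub>R A + u *\<^sub>R B"
    using assms(2) unfolding in_segment by auto
  have comb: "\<sigma> * signed_area X Y P = (1 - u) * (\<sigma> * signed_area X Y A) + u * (\<sigma> * signed_area X Y B)"
    for X Y
    unfolding u(3) signed_area_convex_combination by (simp add: algebra_simps)
  show "signed_area A B P = 0"
    unfolding u(3) signed_area_convex_combination by simp
  show "0 < \<sigma> * signed_area B C P" "0 < \<sigma> * signed_area C D P" "0 < \<sigma> * signed_area D A P"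
    using assms(1) u(1,2) unfolding comb convex_quad_def by (simp_all add: add_pos_pos)
qed

lemma open_segment_between_sides:
  assumes quad: "convex_quad \<sigma> A B C D" and P: "P \<in> open_segment A B"
    and Q: "Q \<in> open_segment B C \<union> open_segment C D \<union> open_segment D A"
  shows "P \<noteq> Q" and "open_segment P Q \<subseteq> quad_inside \<sigma> A B C D"
proof -
  note rotations = convex_quad_rotate[OF quad] convex_quad_rotate[OF convex_quad_rotate[OF quad]]
    convex_quad_rotate[OF convex_quad_rotate[OF convex_quad_rotate[OF quad]]]
  have Q_areas: "0 < \<sigma> * signed_area A B Q" "0 \<le> \<sigma> * signed_area B C Q"
    "0 \<le> \<sigma> * signed_area C D Q" "0 \<le> \<sigma> * signed_area D A Q"
    using Q signed_areas_on_side[OF rotations(1), of Q] signed_areas_on_side[OF rotations(2), of Q]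
      signed_areas_on_side[OF rotations(3), of Q]
    by (auto simp: less_imp_le)
  note P_areas = signed_areas_on_side[OF quad P]
  show "P \<noteq> Q"
    using P_areas(1) Q_areas(1) by auto
  show "open_segment P Q \<subseteq> quad_inside \<sigma> A B C D"
    using P_areas Q_areas
    by (auto simp: quad_inside_def less_imp_le intro: signed_area_open_segment_pos)
qed

lemma three_periodic_billiard_path:
  assumes sides: "(X1, Y1) \<in> quad_sides A B C D" "(X2, Y2) \<in> quad_sides A B C D"
      "(X3, Y3) \<in> quad_sides A B C D"
    and bounces: "P1 \<in> open_segment X1 Y1" "P2 \<in> open_segment X2 Y2" "P3 \<in> open_segment X3 Y3"
    and distinct: "P1 \<noteq> P2" "P2 \<noteq> P3" "P3 \<noteq> P1"
    and inside: "open_segment P1 P2 \<subseteq> interior (quad_region A B C D)"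
      "open_segment P2 P3 \<subseteq> interior (quad_region A B C D)"
      "open_segment P3 P1 \<subseteq> interior (quad_region A B C D)"
    and reflections: "\<exists>c>0. P2 - P1 = c *\<^sub>R reflect_dir (Y1 - X1) (P1 - P3)"
      "\<exists>c>0. P3 - P2 = c *\<^sub>R reflect_dir (Y2 - X2) (P2 - P1)"
      "\<exists>c>0. P1 - P3 = c *\<^sub>R reflect_dir (Y3 - X3) (P3 - P2)"
  shows "has_periodic_billiard_path A B C D"
proof -
  define p where "p i = (if i mod 3 = 0 then P1 else if i mod 3 = 1 then P2 else P3)" for i :: nat
  have mod3: "i mod 3 = 0 \<and> Suc i mod 3 = 1 \<and> Suc (Suc i) mod 3 = 2 \<or>
      i mod 3 = 1 \<and> Suc i mod 3 = 2 \<and> Suc (Suc i) mod 3 = 0 \<or>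
      i mod 3 = 2 \<and> Suc i mod 3 = 0 \<and> Suc (Suc i) mod 3 = 1" for i :: nat
    by presburger
  have "periodic_billiard_path A B C D p 3"
    unfolding periodic_billiard_path_def
  proof (intro conjI allI)
    fix i :: nat
    show "p (i + 3) = p i"
      by (simp add: p_def)
    show "p i \<noteq> p (Suc i)" "open_segment (p i) (p (Suc i)) \<subseteq> interior (quad_region A B C D)"
      using mod3[of i] distinct inside by (auto simp: p_def open_segment_commute)
    show "\<exists>(X, Y) \<in> quad_sides A B C D. p (Suc i) \<in> open_segment X Y \<and>
        (\<exists>c>0. p (Suc (Suc i)) - p (Suc i) = c *\<^sub>R reflect_dir (Y - X) (p (Suc i) - p i))"
      using mod3[of i] sides bounces reflections by (auto simp: p_def)
  qed simp
  thus ?thesis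
    unfolding has_periodic_billiard_path_def by blast
qed

section \<open>The Fagnano configuration\<close>

lemma line_intersection:
  assumes "cross2 u v \<noteq> 0"
  shows "P + (cross2 (Q - P) v / cross2 u v) *\<^sub>R u = Q + (cross2 (Q - P) u / cross2 u v) *\<^sub>R v"
  using assms by (simp add: complex_eq_iff cross2_eq field_simps)

(* Angles A and B are acute, the feet of the altitudes from A to BC and from B to AD lie inside
   these sides, and the rays AD and BC meet beyond D and C, at an acute angle. *)
definition fagnano_config :: "real \<Rightarrow> complex \<Rightarrow> complex \<Rightarrow> complex \<Rightarrow> complex \<Rightarrow> bool" where
  "fagnano_config \<sigma> A B C D \<longleftrightarrow> convex_quad \<sigma> A B C D \<and>
     0 < inner (D - A) (B - A) \<and> 0 < inner (A - B) (C - B) \<and>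
     0 < inner (A - C) (B - C) \<and> 0 < inner (B - D) (A - D) \<and>
     0 < inner (D - A) (C - B) \<and>
     (\<exists>t>0. \<exists>s>0. A + t *\<^sub>R (D - A) = B + s *\<^sub>R (C - B))"

lemma fagnano_config_apex:
  assumes "fagnano_config \<sigma> A B C D"
  obtains E where "cross2 (B - A) (E - A) \<noteq> 0"
    and "0 < inner (B - A) (E - A)" "0 < inner (E - B) (A - B)" "0 < inner (A - E) (B - E)"
    and "foot B (E - B) A = foot B (C - B) A" "foot E (A - E) B = foot A (D - A) B"
    and "reflect_dir (E - B) = reflect_dir (C - B)" "reflect_dir (A - E) = reflect_dir (A - D)"
    and "foot A (B - A) E \<in> open_segment A B"
proof -
  obtain t s where ts: "0 < t" "0 < s" "A + t *\<^sub>R (D - A) = B + s *\<^sub>R (C - B)"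
    using assms unfolding fagnano_config_def by blast
  define E where "E = A + t *\<^sub>R (D - A)"
  have EA: "E - A = t *\<^sub>R (D - A)" "A - E = (- t) *\<^sub>R (D - A)" "A - E = t *\<^sub>R (A - D)"
    and EB: "E - B = s *\<^sub>R (C - B)" "B - E = (- s) *\<^sub>R (C - B)"
    using ts(3) by (simp_all add: E_def algebra_simps)
  have quad: "convex_quad \<sigma> A B C D"
    and acute: "0 < inner (D - A) (B - A)" "0 < inner (A - B) (C - B)" "0 < inner (D - A) (C - B)"
    using assms unfolding fagnano_config_def by blast+
  have "cross2 (B - A) (E - A) \<noteq> 0"
    using quad ts(1) unfolding EA convex_quad_def signed_area_def by auto
  moreover have "0 < inner (B - A) (E - A)" "0 < inner (E - B) (A - B)" "0 < inner (A - E) (B - E)"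
    using acute ts unfolding EA(1,2) EB by (simp_all add: inner_commute)
  moreover have "foot B (E - B) A = foot B (C - B) A" "foot E (A - E) B = foot A (D - A) B"
    using ts by (simp_all add: EA(1) EB(1) foot_scaleR foot_swap[of E A])
  moreover have "reflect_dir (E - B) = reflect_dir (C - B)" "reflect_dir (A - E) = reflect_dir (A - D)"
    unfolding EB(1) EA(3) using reflect_dir_scaleR[of s] reflect_dir_scaleR[of t] ts by simp_all
  moreover have "foot A (B - A) E \<in> open_segment A B"
    using acute ts by (intro foot_in_open_segment) (simp_all add: EA(1) EB(1) inner_commute)
  ultimately show ?thesis
    using that by blast
qed

lemma fagnano_config_has_periodic_billiard_path:
  assumes "fagnano_config \<sigma> A B C D"
  shows "has_periodic_billiard_path A B C D"
proof -
  obtain E where nondegenerate: "cross2 (B - A) (E - A) \<noteq> 0"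
    and triangle_acute: "0 < inner (B - A) (E - A)" "0 < inner (E - B) (A - B)"
      "0 < inner (A - E) (B - E)"
    and feet: "foot B (E - B) A = foot B (C - B) A" "foot E (A - E) B = foot A (D - A) B"
    and sides: "reflect_dir (E - B) = reflect_dir (C - B)" "reflect_dir (A - E) = reflect_dir (A - D)"
    and H: "foot A (B - A) E \<in> open_segment A B"
    using fagnano_config_apex[OF assms] by blast
  note reflections = orthic_triangle_reflections[OF nondegenerate triangle_acute, unfolded feet sides]
  have quad: "convex_quad \<sigma> A B C D"
    and acute: "0 < inner (A - B) (C - B)" "0 < inner (A - C) (B - C)"
      "0 < inner (D - A) (B - A)" "0 < inner (B - D) (A - D)"
    using assms unfolding fagnano_config_def by blast+
  have F2: "foot B (C - B) A \<in> open_segment B C"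
    using acute by (intro foot_in_open_segment) (simp_all add: inner_commute)
  have "foot A (D - A) B \<in> open_segment A D"
    using acute by (intro foot_in_open_segment) (simp_all add: inner_commute)
  hence F1: "foot A (D - A) B \<in> open_segment D A"
    by (metis open_segment_commute)
  note HF2 = open_segment_between_sides[OF quad H UnI1[OF UnI1[OF F2]]]
    and HF1 = open_segment_between_sides[OF quad H UnI2[OF F1]]
    and F2F1 = open_segment_between_sides[OF convex_quad_rotate[OF quad] F2 UnI1[OF UnI2[OF F1]],
      unfolded quad_inside_rotate[of \<sigma> B C D A]]
  show ?thesis
  proof (rule three_periodic_billiard_path[OF _ _ _ H F2 F1 HF2(1) F2F1(1) HF1(1)[symmetric] _ _ _
        reflections])
    show "(A, B) \<in> quad_sides A B C D" "(B, C) \<in> quad_sides A B C D" "(D, A) \<in> quad_sides A B C D"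
      by (simp_all add: quad_sides_def)
    show "open_segment (foot A (B - A) E) (foot B (C - B) A) \<subseteq> interior (quad_region A B C D)"
      "open_segment (foot B (C - B) A) (foot A (D - A) B) \<subseteq> interior (quad_region A B C D)"
      "open_segment (foot A (D - A) B) (foot A (B - A) E) \<subseteq> interior (quad_region A B C D)"
      using HF2(2) F2F1(2) HF1(2) quad_inside_subset_interior[OF quad]
      by (auto simp: open_segment_commute)
  qed
qed

lemma signed_area_affine:
  "signed_area (X + w * A) (X + w * B) (X + w * C) = (cmod w)\<^sup>2 * signed_area A B C"
  unfolding signed_area_def diff_affine cross2_mult ..

lemma signed_area_cnj: "signed_area (cnj A) (cnj B) (cnj C) = - signed_area A B C"
  by (simp add: signed_area_def cross2_eq algebra_simps)

lemma fagnano_config_affine: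
  assumes "w \<noteq> 0" "fagnano_config \<sigma> A B C D"
  shows "fagnano_config \<sigma> (X + w * A) (X + w * B) (X + w * C) (X + w * D)"
proof -
  obtain t s where ts: "0 < t" "0 < s" "A + t *\<^sub>R (D - A) = B + s *\<^sub>R (C - B)"
    using assms(2) unfolding fagnano_config_def by blast
  have "X + w * A + t *\<^sub>R (w * (D - A)) = X + w * (A + t *\<^sub>R (D - A))"
    "X + w * B + s *\<^sub>R (w * (C - B)) = X + w * (B + s *\<^sub>R (C - B))"
    by (simp_all add: scaleR_conv_of_real algebra_simps)
  hence "\<exists>t>0. \<exists>s>0. X + w * A + t *\<^sub>R (w * (D - A)) = X + w * B + s *\<^sub>R (w * (C - B))"
    using ts by metis
  moreover have "0 < (cmod w)\<^sup>2"
    using assms(1) by simp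
  ultimately show ?thesis
    using assms(2)
    unfolding fagnano_config_def convex_quad_def signed_area_affine diff_affine inner_mult
    by (simp add: mult.left_commute[of \<sigma>] zero_less_mult_iff)
qed

lemma fagnano_config_cnj:
  assumes "fagnano_config \<sigma> A B C D"
  shows "fagnano_config (- \<sigma>) (cnj A) (cnj B) (cnj C) (cnj D)"
proof -
  obtain t s where ts: "0 < t" "0 < s" "A + t *\<^sub>R (D - A) = B + s *\<^sub>R (C - B)"
    using assms unfolding fagnano_config_def by blast
  have "cnj A + t *\<^sub>R (cnj D - cnj A) = cnj B + s *\<^sub>R (cnj C - cnj B)"
    using arg_cong[OF ts(3), of cnj] by (simp add: scaleR_conv_of_real)
  hence "\<exists>t>0. \<exists>s>0. cnj A + t *\<^sub>R (cnj D - cnj A) = cnj B + s *\<^sub>R (cnj C - cnj B)"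
    using ts(1,2) by blast
  thus ?thesis
    using assms
    by (simp add: fagnano_config_def convex_quad_def signed_area_cnj inner_cnj
        complex_cnj_diff[symmetric] del: complex_cnj_diff)
qed

section \<open>Near-square quadrilaterals\<close>

lemma convex_quad_normalized:
  assumes "0 < Re b" "Re b < 1" "0 < Re d" "Re d < 1" "Im b < 0" "0 < Im d"
  shows "convex_quad 1 0 b 1 d"
proof -
  have areas: "signed_area 0 b 1 = - Im b" "signed_area b 1 0 = - Im b"
    "signed_area 1 d 0 = Im d" "signed_area d 0 1 = Im d"
    "signed_area 0 b d = Re b * Im d + (- Im b) * Re d"
    "signed_area d 0 b = Re b * Im d + (- Im b) * Re d"
    "signed_area b 1 d = (1 - Re b) * Im d + (- Im b) * (1 - Re d)"
    "signed_area 1 d b = (1 - Re b) * Im d + (- Im b) * (1 - Re d)"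
    by (simp_all add: signed_area_def cross2_eq algebra_simps)
  have "0 < (1 - Re b) * Im d" "0 < - Im b * (1 - Re d)" "0 < Re b * Im d" "0 < - Im b * Re d"
    using assms by (simp_all add: mult_neg_pos)
  thus ?thesis
    using assms unfolding convex_quad_def areas mult_1_left by (intro conjI; linarith)
qed

lemma near_square_angle_inequalities:
  fixes a1 a2 a3 a4 :: real
  assumes "\<forall>a \<in> {a1, a2, a3, a4}. pi / 6 < a \<and> a < pi / 3"
    and "0 < cos (a1 + a2)" "cos (a1 + a3) < 0"
  shows "cos (a1 + a2) < 1 / 2" "sin a3 < sin (a1 + a3)" "1 / 2 < sin a4"
    "0 < sin (a3 - a2)" "0 < cos (a3 - a2)"
proof -
  have r: "pi / 6 < a1" "a1 < pi / 3" "pi / 6 < a2" "a2 < pi / 3" "pi / 6 < a3" "a3 < pi / 3"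
    "pi / 6 < a4" "a4 < pi / 3"
    using assms(1) by auto
  show "cos (a1 + a2) < 1 / 2"
    using cos_monotone_0_pi[of "pi / 3" "a1 + a2"] r cos_60 by linarith
  have "a1 + a2 < pi / 2"
  proof (rule ccontr)
    assume "\<not> a1 + a2 < pi / 2"
    hence "cos (a1 + a2) \<le> cos (pi / 2)"
      using r by (intro cos_monotone_0_pi_le) linarith+
    thus False
      using assms(2) by simp
  qed
  have "pi / 2 < a1 + a3"
  proof (rule ccontr)
    assume "\<not> pi / 2 < a1 + a3"
    hence "0 \<le> cos (a1 + a3)"
      using r by (intro cos_ge_zero) linarith+
    thus False
      using assms(3) by simp
  qed
  hence "sin a3 < sin (pi - (a1 + a3))"
    using r by (intro sin_monotone_2pi) linarith+
  thus "sin a3 < sin (a1 + a3)"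
    by simp
  show "1 / 2 < sin a4"
    using sin_monotone_2pi[of "pi / 6" a4] r sin_30 by linarith
  show "0 < sin (a3 - a2)"
    using \<open>a1 + a2 < pi / 2\<close> \<open>pi / 2 < a1 + a3\<close> r by (intro sin_gt_zero) linarith+
  show "0 < cos (a3 - a2)"
    using r by (intro cos_gt_zero_pi) linarith+
qed

lemma law_of_sines_normalized:
  fixes r s \<alpha> \<beta> :: real
  assumes "r * cos \<alpha> + s * cos \<beta> = 1" "r * sin \<alpha> = s * sin \<beta>"
  shows "r * sin (\<alpha> + \<beta>) = sin \<beta>"
proof -
  have "r * sin (\<alpha> + \<beta>) = (r * sin \<alpha>) * cos \<beta> + r * cos \<alpha> * sin \<beta>"
    by (simp add: sin_add algebra_simps)
  also have "\<dots> = sin \<beta> * (r * cos \<alpha> + s * cos \<beta>)"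
    unfolding assms(2) by (simp add: algebra_simps)
  finally show ?thesis
    using assms(1) by simp
qed

lemma polar_products:
  assumes b: "Re b = rb * cos a1" "Im b = - (rb * sin a1)" "1 - Re b = sb * cos a3"
      "Im b = - (sb * sin a3)"
    and d: "Re d = rd * cos a2" "Im d = rd * sin a2"
  shows "inner d b = rb * rd * cos (a1 + a2)"
    and "inner (- b) (1 - b) = - (rb * sb * cos (a1 + a3))"
    and "inner d (1 - b) = rd * sb * cos (a3 - a2)"
    and "cross2 d (1 - b) = rd * sb * sin (a3 - a2)"
    and "inner (b - d) (- d) = rd * (rd - rb * cos (a1 + a2))"
proof -
  have "inner (- b) (1 - b) = - (Re b * (1 - Re b)) + Im b * Im b"
    by (simp add: inner_complex_def algebra_simps)
  also have "Im b * Im b = (rb * sin a1) * (sb * sin a3)"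
    using b(2,4) by (metis minus_mult_minus)
  finally show "inner (- b) (1 - b) = - (rb * sb * cos (a1 + a3))"
    unfolding b(3) unfolding b(1) by (simp add: cos_add algebra_simps)
  show "inner d b = rb * rd * cos (a1 + a2)"
    using b(1,2) d by (simp add: inner_complex_def cos_add algebra_simps)
  have "inner d (1 - b) = Re d * (1 - Re b) + Im d * (- Im b)"
    by (simp add: inner_complex_def)
  thus "inner d (1 - b) = rd * sb * cos (a3 - a2)"
    unfolding b(3,4) d by (simp add: cos_diff algebra_simps)
  have "cross2 d (1 - b) = Re d * (- Im b) - Im d * (1 - Re b)"
    by (simp add: cross2_eq)
  thus "cross2 d (1 - b) = rd * sb * sin (a3 - a2)"
    unfolding b(3,4) d by (simp add: sin_diff algebra_simps)
  have "(Re d)\<^sup>2 + (Im d)\<^sup>2 = rd\<^sup>2"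
    using d by (simp add: power_mult_distrib flip: distrib_left)
  thus "inner (b - d) (- d) = rd * (rd - rb * cos (a1 + a2))"
    using b(1,2) d by (simp add: inner_complex_def cos_add power2_eq_square algebra_simps)
qed

lemma fagnano_config_normalized_coords:
  assumes coords: "0 < Re b" "Re b < 1" "0 < Re d" "Re d < 1" "Im b < 0" "0 < Im d"
    and acute: "0 < inner d b" "0 < inner (- b) (1 - b)" "0 < inner (b - d) (- d)"
      "0 < inner d (1 - b)"
    and converge: "0 < cross2 d (1 - b)"
  shows "fagnano_config 1 0 b 1 d"
proof -
  have "0 < Re b * Im d" "Im b * Re d < 0"
    using coords by (simp_all add: mult_neg_pos)
  hence "0 < cross2 b d"
    unfolding cross2_eq by linarith
  moreover have "0 < cross2 b (1 - b)"
    using coords by (simp add: cross2_eq algebra_simps)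
  ultimately have "0 < cross2 b (1 - b) / cross2 d (1 - b)" "0 < cross2 b d / cross2 d (1 - b)"
    using converge by simp_all
  thus ?thesis
    using line_intersection[of d "1 - b" 0 b] acute converge coords
    unfolding fagnano_config_def
    by (auto simp: convex_quad_normalized[OF coords] inner_complex_def)
qed

lemma fagnano_config_normalized_polar:
  fixes b d :: complex and a1 a2 a3 a4 rb sb rd sd :: real
  assumes angles: "\<forall>a \<in> {a1, a2, a3, a4}. pi / 6 < a \<and> a < pi / 3"
    and radii: "0 < rb" "0 < sb" "0 < rd" "0 < sd"
    and b: "Re b = rb * cos a1" "Im b = - (rb * sin a1)" "1 - Re b = sb * cos a3"
      "Im b = - (sb * sin a3)"
    and d: "Re d = rd * cos a2" "Im d = rd * sin a2" "1 - Re d = sd * cos a4" "Im d = sd * sin a4"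
    and acute: "0 < inner d b" "0 < inner (- b) (1 - b)"
  shows "fagnano_config 1 0 b 1 d"
proof -
  have sin_pos: "0 < sin a" and cos_pos: "0 < cos a" if "a \<in> {a1, a2, a3, a4}" for a
    using angles that by (intro sin_gt_zero cos_gt_zero; force)+
  note products = polar_products[OF b d(1,2)]
  have "0 < cos (a1 + a2)" "cos (a1 + a3) < 0"
    using acute radii unfolding products by (simp_all add: zero_less_mult_iff mult_less_0_iff)
  note trig = near_square_angle_inequalities[OF angles this]
  \<comment> \<open>Law of sines: |b| < 1 < 2 |d|; with cos (a1 + a2) < 1/2 this makes the angle BDA acute.\<close>
  have "rb * sin (a1 + a3) = sin a3"
    using b by (intro law_of_sines_normalized[of rb a1 sb a3]) linarith+
  hence "rb * sin (a1 + a3) < 1 * sin (a1 + a3)"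
    using trig(2) by simp
  hence "rb < 1"
    using trig(2) sin_pos[of a3] by (intro mult_right_less_imp_less[of rb "sin (a1 + a3)"]) simp_all
  have "rd * sin (a2 + a4) = sin a4"
    using d by (intro law_of_sines_normalized[of rd a2 sd a4]) linarith+
  moreover have "rd * sin (a2 + a4) \<le> rd"
    using radii(3) by (simp add: mult_left_le)
  ultimately have "1 / 2 < rd"
    using trig(3) by linarith
  have "rb * cos (a1 + a2) < 1 / 2"
    using \<open>rb < 1\<close> \<open>0 < cos (a1 + a2)\<close> trig(1) radii(1)
    by (smt (verit) mult_less_cancel_right1 mult_strict_left_mono)
  hence "0 < inner (b - d) (- d)"
    using \<open>1 / 2 < rd\<close> unfolding products by simp
  moreover have "0 < inner d (1 - b)" "0 < cross2 d (1 - b)"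
    using radii trig unfolding products by simp_all
  moreover have "0 < rb * cos a1" "0 < sb * cos a3" "0 < rd * cos a2" "0 < sd * cos a4"
    "0 < rb * sin a1" "0 < rd * sin a2"
    using radii sin_pos cos_pos by simp_all
  hence "0 < Re b" "Re b < 1" "0 < Re d" "Re d < 1" "Im b < 0" "0 < Im d"
    using b d by linarith+
  ultimately show ?thesis
    using acute by (intro fagnano_config_normalized_coords)
qed

lemma near_square_affine:
  assumes "w \<noteq> 0"
  shows "near_square \<epsilon> (X + w * A) (X + w * B) (X + w * C) (X + w * D) \<longleftrightarrow> near_square \<epsilon> A B C D"
proof -
  have "0 < (cmod w)\<^sup>2 * (cmod w)\<^sup>2"
    using assms by simp
  hence "((cmod w)\<^sup>2 * x) * ((cmod w)\<^sup>2 * y) < 0 \<longleftrightarrow> x * y < 0" for x y :: real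
    by (metis mult.assoc mult.left_commute mult_less_0_iff not_square_less_zero zero_less_mult_iff)
  thus ?thesis
    unfolding near_square_def diag_splits_def quad_params_def diff_affine cross2_mult
      vangle_mult[OF assms] by simp
qed

lemma near_square_cnj:
  "near_square \<epsilon> (cnj A) (cnj B) (cnj C) (cnj D) \<longleftrightarrow> near_square \<epsilon> A B C D"
  unfolding near_square_def diag_splits_def quad_params_def complex_cnj_diff[symmetric]
    cross2_cnj vangle_cnj by simp

lemma fagnano_config_normalized:
  assumes ns: "near_square (pi / 12) 0 b 1 d"
    and acute: "0 < inner d b" "0 < inner (- b) (1 - b)" and "Im b < 0"
  shows "fagnano_config 1 0 b 1 d"
proof -
  have "Im b * Im d < 0"
    using ns by (simp add: near_square_def diag_splits_def cross2_eq)
  hence "0 < Im d"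
    using \<open>Im b < 0\<close> by (simp add: mult_less_0_iff)
  define a1 a2 a3 a4 where "a1 = vangle b 1" and "a2 = vangle d 1"
    and "a3 = vangle (1 - b) 1" and "a4 = vangle (1 - d) 1"
  have "vangle (b - 1) (0 - 1) = a3" "vangle (d - 1) (0 - 1) = a4"
    using vangle_minus[of "1 - b" 1] vangle_minus[of "1 - d" 1] by (simp_all add: a3_def a4_def)
  hence "\<forall>a \<in> {a1, a2, a3, a4}. \<bar>a - pi / 4\<bar> < pi / 12"
    using ns by (simp add: near_square_def quad_params_def a1_def a2_def)
  moreover have "pi / 6 < a \<and> a < pi / 3" if "\<bar>a - pi / 4\<bar> < pi / 12" for a :: real
    using that unfolding abs_less_iff by linarith
  ultimately have angles: "\<forall>a \<in> {a1, a2, a3, a4}. pi / 6 < a \<and> a < pi / 3"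
    by blast
  note coords = vangle_one_coords[OF a1_def[symmetric]] vangle_one_coords[OF a2_def[symmetric]]
    vangle_one_coords[OF a3_def[symmetric]] vangle_one_coords[OF a4_def[symmetric]]
  have "b \<noteq> 0" "1 - b \<noteq> 0" "d \<noteq> 0" "1 - d \<noteq> 0"
    using \<open>Im b < 0\<close> \<open>0 < Im d\<close> by auto
  thus ?thesis
    using coords \<open>Im b < 0\<close> \<open>0 < Im d\<close> acute
    by (intro fagnano_config_normalized_polar[OF angles, of "cmod b" "cmod (1 - b)" "cmod d" "cmod (1 - d)"])
      simp_all
qed

lemma fagnano_config_normalized_exists:
  assumes ns: "near_square (pi / 12) 0 b 1 d"
    and acute: "0 < inner d b" "0 < inner (- b) (1 - b)"
  shows "\<exists>\<sigma>. fagnano_config \<sigma> 0 b 1 d"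
proof (cases "Im b < 0")
  case True
  thus ?thesis
    using fagnano_config_normalized[OF assms] by blast
next
  case False
  have "Im b * Im d \<noteq> 0"
    using ns by (auto simp: near_square_def diag_splits_def cross2_eq)
  hence "Im (cnj b) < 0"
    using False by simp
  moreover have "near_square (pi / 12) 0 (cnj b) 1 (cnj d)"
    using ns near_square_cnj[of _ 0 b 1 d] by simp
  ultimately have "fagnano_config 1 0 (cnj b) 1 (cnj d)"
    using acute by (intro fagnano_config_normalized) (simp_all add: inner_complex_def)
  from fagnano_config_cnj[OF this] show ?thesis
    by auto
qed

lemma has_periodic_billiard_path_acute_AB:
  assumes ns: "near_square (pi / 12) A B C D"
    and acute: "vangle (D - A) (B - A) < pi / 2" "vangle (A - B) (C - B) < pi / 2"
  shows "has_periodic_billiard_path A B C D"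
proof -
  define w where "w = C - A"
  have "w \<noteq> 0"
    using ns by (auto simp: w_def near_square_def diag_splits_def cross2_eq)
  define b d where "b = (B - A) / w" and "d = (D - A) / w"
  have points: "A + w * 0 = A" "A + w * b = B" "A + w * 1 = C" "A + w * d = D"
    using \<open>w \<noteq> 0\<close> by (simp_all add: w_def b_def d_def)
  have "near_square (pi / 12) 0 b 1 d"
    using ns near_square_affine[OF \<open>w \<noteq> 0\<close>, of _ A 0 b 1 d] unfolding points by simp
  moreover have "0 < inner d b" "0 < inner (- b) (1 - b)"
    using acute vangle_affine[OF \<open>w \<noteq> 0\<close>, of A d 0 b 0] vangle_affine[OF \<open>w \<noteq> 0\<close>, of A 0 b 1 b]
    unfolding points vangle_lt_pi_half_iff[symmetric] by simp_all
  ultimately obtain \<sigma> where "fagnano_config \<sigma> 0 b 1 d"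
    using fagnano_config_normalized_exists by blast
  from fagnano_config_affine[OF \<open>w \<noteq> 0\<close> this, of A] show ?thesis
    unfolding points by (rule fagnano_config_has_periodic_billiard_path)
qed

section \<open>Relabelling the vertices\<close>

lemma periodic_billiard_path_relabel:
  assumes path: "periodic_billiard_path A' B' C' D' p n"
    and region: "quad_region A' B' C' D' = quad_region A B C D"
    and sides: "\<And>X Y. (X, Y) \<in> quad_sides A' B' C' D' \<Longrightarrow>
      (X, Y) \<in> quad_sides A B C D \<or> (Y, X) \<in> quad_sides A B C D"
  shows "periodic_billiard_path A B C D p n"
  unfolding periodic_billiard_path_def
proof (intro conjI allI)
  show "0 < n" "p (i + n) = p i" "p i \<noteq> p (Suc i)"
    "open_segment (p i) (p (Suc i)) \<subseteq> interior (quad_region A B C D)" for i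
    using path region unfolding periodic_billiard_path_def by auto
  fix i
  obtain X Y where XY: "(X, Y) \<in> quad_sides A' B' C' D'" "p (Suc i) \<in> open_segment X Y"
    and bounce: "\<exists>c>0. p (Suc (Suc i)) - p (Suc i) = c *\<^sub>R reflect_dir (Y - X) (p (Suc i) - p i)"
    using path unfolding periodic_billiard_path_def by blast
  from sides[OF XY(1)] show "\<exists>(X, Y) \<in> quad_sides A B C D. p (Suc i) \<in> open_segment X Y \<and>
      (\<exists>c>0. p (Suc (Suc i)) - p (Suc i) = c *\<^sub>R reflect_dir (Y - X) (p (Suc i) - p i))"
  proof
    assume "(X, Y) \<in> quad_sides A B C D"
    thus ?thesis
      using XY(2) bounce by blast
  next
    assume "(Y, X) \<in> quad_sides A B C D"
    moreover have "p (Suc i) \<in> open_segment Y X"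
      using XY(2) by (simp add: open_segment_commute)
    moreover have "reflect_dir (X - Y) = reflect_dir (Y - X)"
      using reflect_dir_scaleR[of "-1" "Y - X"] by simp
    ultimately show ?thesis
      using bounce by (intro bexI[of _ "(Y, X)"]) auto
  qed
qed

lemma has_periodic_billiard_path_reverse:
  assumes "has_periodic_billiard_path A D C B"
  shows "has_periodic_billiard_path A B C D"
proof -
  obtain p n where "periodic_billiard_path A D C B p n"
    using assms unfolding has_periodic_billiard_path_def by blast
  hence "periodic_billiard_path A B C D p n"
    by (rule periodic_billiard_path_relabel) (auto simp: quad_region_def quad_sides_def insert_commute)
  thus ?thesis
    unfolding has_periodic_billiard_path_def by blast
qed

lemma has_periodic_billiard_path_swap_diagonal:
  assumes "has_periodic_billiard_path C B A D"
  shows "has_periodic_billiard_path A B C D"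
proof -
  obtain p n where "periodic_billiard_path C B A D p n"
    using assms unfolding has_periodic_billiard_path_def by blast
  hence "periodic_billiard_path A B C D p n"
    by (rule periodic_billiard_path_relabel) (auto simp: quad_region_def quad_sides_def insert_commute)
  thus ?thesis
    unfolding has_periodic_billiard_path_def by blast
qed

lemma near_square_reverse: "near_square \<epsilon> A B C D \<Longrightarrow> near_square \<epsilon> A D C B"
  by (auto simp: near_square_def diag_splits_def quad_params_def mult.commute)

lemma near_square_swap_diagonal: "near_square \<epsilon> A B C D \<Longrightarrow> near_square \<epsilon> C B A D"
proof -
  have "cross2 (A - C) (P - C) = - cross2 (C - A) (P - A)" for P
    by (simp add: cross2_eq algebra_simps)
  thus "near_square \<epsilon> A B C D \<Longrightarrow> near_square \<epsilon> C B A D"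
    by (auto simp: near_square_def diag_splits_def quad_params_def)
qed

theorem proposition3p2p1:
  fixes A B C D :: complex
  assumes "near_square (pi / 12) A B C D"
    and "two_adjacent_acute A B C D"
  shows "has_periodic_billiard_path A B C D"
proof -
  obtain i where i: "i < 4" "quad_angles A B C D ! i < pi / 2"
    "quad_angles A B C D ! ((i + 1) mod 4) < pi / 2"
    using assms(2) unfolding two_adjacent_acute_def by blast
  consider "i = 0" | "i = 1" | "i = 2" | "i = 3"
    using i(1) by linarith
  thus ?thesis
  proof cases
    case 1
    with i assms(1) show ?thesis
      by (intro has_periodic_billiard_path_acute_AB) (simp_all add: quad_angles_def)
  next
    case 2
    with i near_square_swap_diagonal[OF assms(1)] show ?thesis
      by (intro has_periodic_billiard_path_swap_diagonal[OF has_periodic_billiard_path_acute_AB])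
        (simp_all add: quad_angles_def vangle_commute)
  next
    case 3
    with i near_square_swap_diagonal[OF near_square_reverse[OF assms(1)]] show ?thesis
      by (intro has_periodic_billiard_path_reverse[OF has_periodic_billiard_path_swap_diagonal,
          OF has_periodic_billiard_path_acute_AB]) (simp_all add: quad_angles_def)
  next
    case 4
    with i near_square_reverse[OF assms(1)] show ?thesis
      by (intro has_periodic_billiard_path_reverse[OF has_periodic_billiard_path_acute_AB])
        (simp_all add: quad_angles_def vangle_commute)
  qed
qed

end
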